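(* In the universal enveloping algebra $U(gl(m|n+1))$, the elements $\tau_k=(\mathcal B^k)^{N}_{\ N}$, $k=1,2,3,\dots$, pairwise commute: $[\tau_\ell,\tau_k]=0$ for all $\ell,k$.
   Context: Over $\mathbb{C}$, $N=m+n+1$, parity $(p)=0$ for $1\le p\le m$ and $(p)=1$ for $m<p\le N$. $gl(m|n+1)$ has homogeneous basis $E_{pq}$ ($1\le p,q\le N$) of parity $(p)+(q)$ with graded bracket $[E_{pq},E_{rs}]=\delta_{qr}E_{ps}-(-1)^{((p)+(q))((r)+(s))}\delta_{ps}E_{rq}$. $\mathcal B$ is the $N\times N$ matrix with entries $\mathcal B^p_{\ q}=(-1)^{(p)}E_{pq}\in U(gl(m|n+1))$, and its powers are defined recursively by $(\mathcal B^k)^p_{\ q}=\sum_{r=1}^N\mathcal B^p_{\ r}(\mathcal B^{k-1})^r_{\ q}$, $(\mathcal B^0)^p_{\ q}=\delta_{pq}$. The $\tau_k$ are even elements, so $[\ ,\ ]$ is the ordinary commutator. *)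

theory Defs
  imports Complex_Main
begin

definition par :: "nat \<Rightarrow> nat \<Rightarrow> nat" where
  "par m p = (if p \<le> m then 0 else 1)"

text \<open>A family e of elements of a ring 'a satisfies the defining relations of
  U(gl(m|n+1)) on the generators E_pq:
  E_pq E_rs - (-1)^(|E_pq||E_rs|) E_rs E_pq = [E_pq,E_rs]
  = delta_qr E_ps - (-1)^(((p)+(q))((r)+(s))) delta_ps E_rq.\<close>
definition gl_rels :: "nat \<Rightarrow> nat \<Rightarrow> (nat \<Rightarrow> nat \<Rightarrow> 'a::ring_1) \<Rightarrow> bool" where
  "gl_rels m n e \<longleftrightarrow>
    (\<forall>p\<in>{1..m+n+1}. \<forall>q\<in>{1..m+n+1}. \<forall>r\<in>{1..m+n+1}. \<forall>s\<in>{1..m+n+1}.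
      e p q * e r s
        - (-1) ^ ((par m p + par m q) * (par m r + par m s)) * e r s * e p q
      = (if q = r then e p s else 0)
        - (-1) ^ ((par m p + par m q) * (par m r + par m s)) * (if p = s then e r q else 0))"

definition Bmat :: "nat \<Rightarrow> (nat \<Rightarrow> nat \<Rightarrow> 'a::ring_1) \<Rightarrow> nat \<Rightarrow> nat \<Rightarrow> 'a" where
  "Bmat m e p q = (-1) ^ par m p * e p q"

fun Bpow :: "nat \<Rightarrow> nat \<Rightarrow> (nat \<Rightarrow> nat \<Rightarrow> 'a::ring_1) \<Rightarrow> nat \<Rightarrow> nat \<Rightarrow> nat \<Rightarrow> 'a" where
  "Bpow m n e 0 p q = (if p = q then 1 else 0)"
| "Bpow m n e (Suc k) p q = (\<Sum>r = 1..m+n+1. Bmat m e p r * Bpow m n e k r q)"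

definition tau :: "nat \<Rightarrow> nat \<Rightarrow> (nat \<Rightarrow> nat \<Rightarrow> 'a::ring_1) \<Rightarrow> nat \<Rightarrow> 'a" where
  "tau m n e k = Bpow m n e k (m+n+1) (m+n+1)"

end

theory Submission
  imports Defs
begin

text \<open>
  Write \<open>P a i j\<close> for the \<open>(i, j)\<close> entry of \<open>B^a\<close> and \<open>[x, y]_s = x y - s y x\<close>.
  Under super commutation with an entry of \<open>B\<close>, the entries of every power \<open>B^b\<close> transform
  exactly like those of \<open>B\<close>. Writing \<open>B^(a+1) = B B^a\<close> and inducting on \<open>a\<close>, this gives the
  exchange relation
  \<open>[P a i j, P b k l]_s = \<plusminus> (\<Sum>t<a. P t k j P (a+b-1-t) i l - P (a+b-1-t) k j P t i l)\<close>.
  For \<open>i = j = k = l = N\<close> the sign \<open>s\<close> is \<open>1\<close>, so the left-hand side is the commutator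
  \<open>[\<tau> a, \<tau> b]\<close>, while every summand is a commutator \<open>[\<tau> t, \<tau> (a+b-1-t)]\<close> with \<open>t < a\<close>.
  Strong induction on \<open>a\<close> therefore shows that all \<open>\<tau> a\<close> commute.
\<close>

definition parity_sign :: "nat \<Rightarrow> 'a::ring_1" where
  "parity_sign x = (if even x then 1 else -1)"

lemma neg_one_power_eq_parity_sign: "(-1) ^ x = parity_sign x"
  by (simp add: parity_sign_def minus_one_power_iff)

lemma parity_sign_commute: "parity_sign x * y = y * parity_sign x"
  by (simp add: parity_sign_def)

definition scomm :: "'a::ring \<Rightarrow> 'a \<Rightarrow> 'a \<Rightarrow> 'a" where
  "scomm s x y = x * y - s * y * x"

lemma scomm_sum_left: "scomm s (\<Sum>r\<in>A. f r) y = (\<Sum>r\<in>A. scomm s (f r) y)"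
  by (simp add: scomm_def sum_distrib_left sum_distrib_right sum_subtractf)

lemma scomm_sum_right: "scomm s x (\<Sum>r\<in>A. f r) = (\<Sum>r\<in>A. scomm s x (f r))"
  by (simp add: scomm_def sum_distrib_left sum_distrib_right sum_subtractf)

lemma scomm_mult_left:
  assumes "\<And>w. b * w = w * b"
  shows "scomm (a * b) (x * y) z = x * scomm b y z + b * scomm a x z * y"
proof -
  have "b * x * z * y = x * b * z * y" "b * a * z * x * y = a * b * z * x * y"
    using assms[of x] assms[of a] by simp_all
  then show ?thesis by (simp add: scomm_def algebra_simps)
qed

lemma scomm_mult_right:
  assumes "\<And>w. b * w = w * b"
  shows "scomm (a * b) x (y * z) = scomm a x y * z + a * y * scomm b x z"
proof -
  have "a * y * b * z * x = a * b * y * z * x"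
    using assms[of y] by (simp add: mult.assoc)
  then show ?thesis by (simp add: scomm_def algebra_simps)
qed

definition exchange_sum ::
    "(nat \<Rightarrow> 'a::ring) \<Rightarrow> (nat \<Rightarrow> 'a) \<Rightarrow> nat \<Rightarrow> nat \<Rightarrow> 'a" where
  "exchange_sum f g a b = (\<Sum>t<a. f t * g (a + b - 1 - t) - f (a + b - 1 - t) * g t)"

lemma exchange_sum_0 [simp]: "exchange_sum f g 0 b = 0"
  by (simp add: exchange_sum_def)

lemma exchange_sum_Suc:
  "exchange_sum f g (Suc a) b
    = exchange_sum f (\<lambda>t. g (Suc t)) a b + f a * g b - f (a + b) * g 0"
proof -
  have "(\<Sum>t<Suc a. f t * g (Suc a + b - 1 - t))
      = (\<Sum>t<a. f t * g (Suc (a + b - 1 - t))) + f a * g b"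
    by (simp add: Suc_diff_Suc)
  moreover have "(\<Sum>t<Suc a. f (Suc a + b - 1 - t) * g t)
      = f (a + b) * g 0 + (\<Sum>t<a. f (a + b - 1 - t) * g (Suc t))"
    by (simp add: sum.lessThan_Suc_shift del: sum.lessThan_Suc)
  ultimately show ?thesis
    by (simp add: exchange_sum_def sum_subtractf algebra_simps)
qed

(* otherwise simp splits the last index N off every sum over {1..N} *)
declare sum.cl_ivl_Suc [simp del]

locale gl_super_generators =
  fixes m n :: nat and e :: "nat \<Rightarrow> nat \<Rightarrow> 'a::ring_1"
  assumes gl_rels: "gl_rels m n e"
begin

abbreviation "N \<equiv> m + n + 1"
abbreviation "Idx \<equiv> {1..N}"
abbreviation "B \<equiv> Bmat m e"
abbreviation "P \<equiv> Bpow m n e"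

definition psign :: "nat \<Rightarrow> 'a" where
  "psign p = parity_sign (par m p)"

definition ssign :: "nat \<Rightarrow> nat \<Rightarrow> nat \<Rightarrow> nat \<Rightarrow> 'a" where
  "ssign i j k l = parity_sign ((par m i + par m j) * (par m k + par m l))"

definition gsign :: "nat \<Rightarrow> nat \<Rightarrow> nat \<Rightarrow> nat \<Rightarrow> 'a" where
  "gsign i j k l =
    parity_sign (par m i * par m j + par m i * par m k + par m j * par m k)"

lemma psign_commute: "psign p * x = x * psign p"
  and ssign_commute: "ssign i j k l * x = x * ssign i j k l"
  and gsign_commute: "gsign i j k l * x = x * gsign i j k l"
  by (simp_all add: psign_def ssign_def gsign_def parity_sign_commute)

lemma mult_psign_left_commute: "x * (psign p * y) = psign p * (x * y)"
  and mult_gsign_left_commute: "x * (gsign i j k l * y) = gsign i j k l * (x * y)"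
  by (metis mult.assoc psign_commute, metis mult.assoc gsign_commute)

lemma ssign_split_left: "ssign i j k l = ssign i r k l * ssign r j k l"
  and ssign_split_right: "ssign i j k l = ssign i j k r * ssign i j r l"
  and ssign_diag_left: "ssign i i k l = 1"
  and ssign_diag_right: "ssign i j k k = 1"
  and ssign_psign_swap: "ssign i j k i * psign i = ssign i j k j * psign j"
  and ssign_psign_eq_gsign: "ssign i j k i * psign i = gsign i j k i"
  and gsign_ssign: "gsign r j k l * ssign i r k j = gsign i j k l"
  and gsign_ssign_swap: "gsign i j k l * ssign k j i l = ssign k j k l * psign k"
  and gsign_psign: "gsign k j k l * psign k = 1"
  and gsign_swap: "gsign k j i l = gsign i j k l"
  and gsign_square: "gsign i j k l * gsign i j k l = 1"
  unfolding psign_def ssign_def gsign_def parity_sign_def par_def by auto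

lemma Bmat_scomm:
  assumes "i \<in> Idx" "j \<in> Idx" "k \<in> Idx" "l \<in> Idx"
  shows "scomm (ssign i j k l) (B i j) (B k l)
    = (if j = k then psign j * B i l else 0)
      - ssign i j k l * (if i = l then psign i * B k j else 0)"
proof -
  have "e i j * e k l - ssign i j k l * e k l * e i j
      = (if j = k then e i l else 0) - ssign i j k l * (if i = l then e k j else 0)"
    using gl_rels assms unfolding gl_rels_def ssign_def neg_one_power_eq_parity_sign by blast
  then show ?thesis
    by (auto simp: scomm_def Bmat_def psign_def ssign_def parity_sign_def par_def algebra_simps
        neg_eq_iff_add_eq_0 split: if_splits)
qed

lemma Bpow_add: "k \<in> Idx \<Longrightarrow> (\<Sum>r\<in>Idx. P s k r * P t r l) = P (s + t) k l"
proof (induction s arbitrary: k)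
  case 0
  have "(\<Sum>r\<in>Idx. P 0 k r * P t r l) = (\<Sum>r\<in>Idx. if k = r then P t r l else 0)"
    by (intro sum.cong) auto
  with 0 show ?case by simp
next
  case (Suc s)
  have "(\<Sum>r\<in>Idx. P (Suc s) k r * P t r l)
      = (\<Sum>q\<in>Idx. B k q * (\<Sum>r\<in>Idx. P s q r * P t r l))"
    by (simp add: sum_distrib_left sum_distrib_right mult.assoc) (rule sum.swap)
  also have "\<dots> = (\<Sum>q\<in>Idx. B k q * P (s + t) q l)"
    using Suc.IH by (intro sum.cong) auto
  finally show ?case by simp
qed

lemma Bmat_Bpow_scomm:
  assumes ij: "i \<in> Idx" "j \<in> Idx" and kl: "k \<in> Idx" "l \<in> Idx"
  shows "scomm (ssign i j k l) (B i j) (P b k l)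
    = (if j = k then psign j * P b i l else 0)
      - ssign i j k l * (if i = l then psign i * P b k j else 0)"
  using kl
proof (induction b arbitrary: k)
  case 0
  have "ssign i j j i * psign i = psign j"
    using ssign_psign_swap[of i j j] by (simp add: ssign_diag_right)
  with 0 show ?case by (auto simp: scomm_def ssign_diag_right)
next
  case (Suc b)
  have "scomm (ssign i j k l) (B i j) (P (Suc b) k l)
      = (\<Sum>r\<in>Idx. scomm (ssign i j k r) (B i j) (B k r) * P b r l)
        + (\<Sum>r\<in>Idx. ssign i j k r * B k r * scomm (ssign i j r l) (B i j) (P b r l))"
    unfolding Bpow.simps scomm_sum_right sum.distrib[symmetric]
    by (intro sum.cong refl) (metis scomm_mult_right ssign_commute ssign_split_right)
  moreover have "(\<Sum>r\<in>Idx. scomm (ssign i j k r) (B i j) (B k r) * P b r l)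
      = (\<Sum>r\<in>Idx. (if j = k then psign j * (B i r * P b r l) else 0)
          - (if r = i then ssign i j k i * psign i * B k j * P b i l else 0))"
    using ij Suc.prems by (intro sum.cong refl) (auto simp: Bmat_scomm algebra_simps)
  moreover have "ssign i j k r * B k r * scomm (ssign i j r l) (B i j) (P b r l)
      = (if r = j then ssign i j k j * psign j * B k j * P b i l else 0)
        - (if i = l then ssign i j k l * psign i * (B k r * P b r j) else 0)"
    if "r \<in> Idx" for r
  proof -
    have "ssign i' j k r' * (B k r' * (ssign i' j r' l * (psign i' * X)))
        = ssign i' j k l * (psign i' * (B k r' * X))" for i' r' X
      by (metis mult.assoc ssign_commute psign_commute ssign_split_right)
    then show ?thesis
      by (simp add: Suc.IH[OF that kl(2)] right_diff_distrib mult.assoc mult_psign_left_commute)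
  qed
  then have "(\<Sum>r\<in>Idx. ssign i j k r * B k r * scomm (ssign i j r l) (B i j) (P b r l))
      = (\<Sum>r\<in>Idx. (if r = j then ssign i j k j * psign j * B k j * P b i l else 0)
          - (if i = l then ssign i j k l * psign i * (B k r * P b r j) else 0))"
    by (rule sum.cong[OF refl])
  ultimately show ?case
    using ij ssign_psign_swap[of i j k]
    by (simp add: sum_subtractf sum_distrib_left sum.delta mult.assoc)
qed

lemma sum_gsign_Bmat_Bpow_Bpow:
  assumes ij: "i \<in> Idx" "j \<in> Idx" and kl: "k \<in> Idx" "l \<in> Idx"
  shows "(\<Sum>r\<in>Idx. gsign r j k l * (B i r * P t k j * P u r l))
    = P t i j * P u k l
      - (if i = j then gsign i j k l * psign i * P (t + u) k l else 0)
      + gsign i j k l * P t k j * P (Suc u) i l"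
proof -
  have "gsign r j k l * (B i r * P t k j * P u r l)
     = (if r = k then P t i j * P u r l else 0)
       - (if i = j then gsign i j k l * psign i * (P t k r * P u r l) else 0)
       + gsign i j k l * P t k j * (B i r * P u r l)"
    if r: "r \<in> Idx" for r
  proof -
    have swap: "B i r * P t k j
        = (if r = k then psign r * P t i j else 0)
          - ssign i r k j * (if i = j then psign i * P t k r else 0)
          + ssign i r k j * P t k j * B i r"
      using Bmat_Bpow_scomm[OF ij(1) r kl(1) ij(2), of t] by (simp add: scomm_def algebra_simps)
    have "gsign r j k l * (B i r * P t k j * P u r l)
       = gsign r j k l * ((if r = k then psign r * P t i j else 0) * P u r l)
        - (gsign r j k l * ssign i r k j) * (if i = j then psign i * P t k r else 0) * P u r l
        + (gsign r j k l * ssign i r k j) * P t k j * (B i r * P u r l)"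
      unfolding swap by (simp add: algebra_simps)
    then show ?thesis
      using gsign_ssign[of r j k l i] gsign_psign[of k j l]
      by (auto simp: mult.assoc[symmetric])
  qed
  then have "(\<Sum>r\<in>Idx. gsign r j k l * (B i r * P t k j * P u r l))
     = (\<Sum>r\<in>Idx. (if r = k then P t i j * P u r l else 0)
       - (if i = j then gsign i j k l * psign i * (P t k r * P u r l) else 0)
       + gsign i j k l * P t k j * (B i r * P u r l))"
    by (rule sum.cong[OF refl])
  also have "\<dots> = P t i j * P u k l
      - (if i = j then gsign i j k l * psign i * P (t + u) k l else 0)
      + gsign i j k l * P t k j * P (Suc u) i l"
    using kl Bpow_add[OF kl(1), of t u l]
    by (simp add: sum.distrib sum_subtractf sum_distrib_left[symmetric] sum.delta')
  finally show ?thesis .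
qed

lemma sum_Bmat_gsign_exchange_sum:
  assumes ij: "i \<in> Idx" "j \<in> Idx" and kl: "k \<in> Idx" "l \<in> Idx"
  shows "(\<Sum>r\<in>Idx.
      B i r * (gsign r j k l * exchange_sum (\<lambda>t. P t k j) (\<lambda>t. P t r l) a b))
    = exchange_sum (\<lambda>t. P t i j) (\<lambda>t. P t k l) a b
      + gsign i j k l * exchange_sum (\<lambda>t. P t k j) (\<lambda>t. P (Suc t) i l) a b"
proof -
  have "(\<Sum>r\<in>Idx.
      B i r * (gsign r j k l * exchange_sum (\<lambda>t. P t k j) (\<lambda>t. P t r l) a b))
    = (\<Sum>r\<in>Idx. \<Sum>t<a. gsign r j k l * (B i r * P t k j * P (a + b - 1 - t) r l)
        - gsign r j k l * (B i r * P (a + b - 1 - t) k j * P t r l))"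
    unfolding exchange_sum_def
    by (simp add: sum_distrib_left right_diff_distrib mult.assoc mult_gsign_left_commute)
  also have "\<dots> = (\<Sum>t<a.
        (\<Sum>r\<in>Idx. gsign r j k l * (B i r * P t k j * P (a + b - 1 - t) r l))
        - (\<Sum>r\<in>Idx. gsign r j k l * (B i r * P (a + b - 1 - t) k j * P t r l)))"
    by (subst sum.swap) (simp add: sum_subtractf)
  also have "\<dots> = (\<Sum>t<a.
        (P t i j * P (a + b - 1 - t) k l - P (a + b - 1 - t) i j * P t k l)
        + gsign i j k l
          * (P t k j * P (Suc (a + b - 1 - t)) i l - P (a + b - 1 - t) k j * P (Suc t) i l))"
    by (intro sum.cong refl, simp only: sum_gsign_Bmat_Bpow_Bpow[OF ij kl])
      (simp add: algebra_simps del: Bpow.simps)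
  finally show ?thesis
    by (simp add: exchange_sum_def sum.distrib sum_distrib_left)
qed

lemma sum_ssign_scomm_Bmat_Bpow:
  assumes i: "i \<in> Idx" and kl: "k \<in> Idx" "l \<in> Idx"
  shows "(\<Sum>r\<in>Idx. ssign r j k l * scomm (ssign i r k l) (B i r) (P b k l) * P a r j)
    = ssign k j k l * psign k * P b i l * P a k j
      - (if i = l then ssign i j k l * psign i * P (b + a) k j else 0)"
proof -
  have "ssign r j k l * scomm (ssign i r k l) (B i r) (P b k l) * P a r j
      = (if r = k then ssign k j k l * psign k * P b i l * P a k j else 0)
        - (if i = l then ssign i j k l * psign i * (P b k r * P a r j) else 0)"
    if r: "r \<in> Idx" for r
  proof -
    have "ssign r j k l * ssign i r k l = ssign i j k l"
      using ssign_split_left[of i j k l r] ssign_commute[of r j k l "ssign i r k l"] by simp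
    then show ?thesis
      by (auto simp: Bmat_Bpow_scomm[OF i r kl] ring_distribs mult.assoc[symmetric])
  qed
  then show ?thesis
    using kl Bpow_add[OF kl(1), of b a j]
    by (simp add: sum_subtractf sum_distrib_left[symmetric] sum.delta')
qed

lemma Bpow_exchange:
  assumes "i \<in> Idx" "j \<in> Idx" "k \<in> Idx" "l \<in> Idx"
  shows "scomm (ssign i j k l) (P a i j) (P b k l)
    = gsign i j k l * exchange_sum (\<lambda>t. P t k j) (\<lambda>t. P t i l) a b"
  using assms
proof (induction a arbitrary: i j k l)
  case 0
  then show ?case by (simp add: scomm_def ssign_diag_left)
next
  case (Suc a)
  note ij = Suc.prems(1,2) and kl = Suc.prems(3,4)
  have "scomm (ssign i j k l) (P (Suc a) i j) (P b k l)
      = (\<Sum>r\<in>Idx. B i r * scomm (ssign r j k l) (P a r j) (P b k l))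
        + (\<Sum>r\<in>Idx. ssign r j k l * scomm (ssign i r k l) (B i r) (P b k l) * P a r j)"
    unfolding Bpow.simps scomm_sum_left sum.distrib[symmetric]
    by (intro sum.cong refl) (metis scomm_mult_left ssign_commute ssign_split_left)
  also have "\<dots> = (\<Sum>r\<in>Idx.
          B i r * (gsign r j k l * exchange_sum (\<lambda>t. P t k j) (\<lambda>t. P t r l) a b))
        + (\<Sum>r\<in>Idx. ssign r j k l * scomm (ssign i r k l) (B i r) (P b k l) * P a r j)"
    using Suc.IH ij kl by (intro arg_cong2[where f = "(+)"] sum.cong) auto
  also have "\<dots> = exchange_sum (\<lambda>t. P t i j) (\<lambda>t. P t k l) a b
      + gsign i j k l * exchange_sum (\<lambda>t. P t k j) (\<lambda>t. P (Suc t) i l) a b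
      + (ssign k j k l * psign k * P b i l * P a k j
        - (if i = l then ssign i j k l * psign i * P (b + a) k j else 0))"
    by (simp only: sum_Bmat_gsign_exchange_sum[OF ij kl]
        sum_ssign_scomm_Bmat_Bpow[OF ij(1) kl])
  \<comment> \<open>the induction hypothesis again, now for the entries \<open>(k, j)\<close> and \<open>(i, l)\<close>\<close>
  also have "exchange_sum (\<lambda>t. P t i j) (\<lambda>t. P t k l) a b
      = gsign i j k l * scomm (ssign k j i l) (P a k j) (P b i l)"
    using Suc.IH[OF kl(1) ij(2) ij(1) kl(2)] gsign_swap[of i j k l] gsign_square[of i j k l]
    by (simp add: mult.assoc[symmetric])
  finally have step: "scomm (ssign i j k l) (P (Suc a) i j) (P b k l)
      = gsign i j k l * (P a k j * P b i l - ssign k j i l * P b i l * P a k j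
          + exchange_sum (\<lambda>t. P t k j) (\<lambda>t. P (Suc t) i l) a b)
        + ssign k j k l * psign k * P b i l * P a k j
        - (if i = l then ssign i j k l * psign i * P (a + b) k j else 0)"
    by (cases "i = l") (simp_all add: scomm_def algebra_simps del: Bpow.simps)
  have "ssign k j k l * (psign k * X) = gsign i j k l * (ssign k j i l * X)" for X
    by (simp add: gsign_ssign_swap mult.assoc[symmetric])
  moreover have "ssign i j k l * (psign i * X) = gsign i j k l * X" if "i = l" for X
    using that ssign_psign_eq_gsign by (simp add: mult.assoc[symmetric])
  ultimately show ?case
    using step
    by (cases "i = l") (simp_all add: exchange_sum_Suc algebra_simps del: Bpow.simps(2))
qed

lemma Bpow_diag_commute: "P a N N * P b N N = P b N N * P a N N"
proof (induction a arbitrary: b rule: less_induct)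
  case (less a)
  have "exchange_sum (\<lambda>t. P t N N) (\<lambda>t. P t N N) a b = 0"
    unfolding exchange_sum_def using less by (intro sum.neutral) auto
  with Bpow_exchange[of N N N N a b] show ?case
    by (simp add: scomm_def ssign_diag_left)
qed

end

theorem proposition11:
  fixes m n :: nat
    and c :: "complex \<Rightarrow> 'a::ring_1"
    and e :: "nat \<Rightarrow> nat \<Rightarrow> 'a"
  assumes alg_one: "c 1 = 1"
    and alg_add: "\<And>x y. c (x + y) = c x + c y"
    and alg_mult: "\<And>x y. c (x * y) = c x * c y"
    and alg_central: "\<And>z a. c z * a = a * c z"
    and rels: "gl_rels m n e"
  shows "\<forall>l\<ge>1. \<forall>k\<ge>1. tau m n e l * tau m n e k - tau m n e k * tau m n e l = 0"
proof -
  interpret gl_super_generators m n e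
    using rels by unfold_locales
  show ?thesis
    unfolding tau_def using Bpow_diag_commute by simp
qed

end
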